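(* Let $0<\varphi<\theta<1$ be constants, let $B_1,B_2,\dots$ be i.i.d. Bernoulli random variables with $\mathbb{P}(B_i=1)=\theta$, and let $\hat\Theta_n=\frac1n\sum_{i=1}^nB_i$. For each of $P=P_{\mathrm{CH},n}$, $P=P_{\mathrm{PBR},n}$ and $P=P_{\mathrm{X},n}$, $$\sqrt n\left(-\frac{\log P(\hat\Theta_n|\varphi)}{n}-\mathrm{KL}(\theta|\varphi)\right)\xrightarrow{D}N(0,\sigma_G^2),\qquad \sigma_G^2=\theta(1-\theta)\left(\log\Big(\frac{\theta}{1-\theta}\frac{1-\varphi}{\varphi}\Big)\right)^2,$$ where $\xrightarrow{D}$ denotes convergence in distribution and $N(\mu,\sigma^2)$ the normal distribution.
   Context: Logarithms are natural. $\mathrm{KL}(t|\varphi)=t\log(t/\varphi)+(1-t)\log\big((1-t)/(1-\varphi)\big)$. For an integer $n\ge1$, $0<\varphi<1$ and $t\in[0,1]$ with $nt$ an integer (convention $0^0=1$), define $P_{\mathrm{X},n}(t|\varphi)=\sum_{k\ge nt}\binom{n}{k}\varphi^k(1-\varphi)^{n-k}$; $P_{\mathrm{CH},n}(t|\varphi)=\left(\frac{\varphi}{t}\right)^{nt}\left(\frac{1-\varphi}{1-t}\right)^{n(1-t)}$ if $t\ge\varphi$, and $=1$ otherwise; $P_{\mathrm{PBR},n}(t|\varphi)=\varphi^{nt}(1-\varphi)^{n(1-t)}(n+1)\binom{n}{nt}$ if $t\ge\varphi$, and $=t^{nt}(1-t)^{n(1-t)}(n+1)\binom{n}{nt}$ otherwise.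 *)

theory Defs
  imports "HOL-Probability.Probability"
begin

definition pw :: "real \<Rightarrow> real \<Rightarrow> real" where
  "pw x a = (if a = 0 then 1 else x powr a)"

definition KL :: "real \<Rightarrow> real \<Rightarrow> real" where
  "KL t \<phi> = t * ln (t / \<phi>) + (1 - t) * ln ((1 - t) / (1 - \<phi>))"

(* n*t is assumed to be an integer; nat \<lfloor>n*t\<rfloor> is then exactly n*t *)
definition P_X :: "nat \<Rightarrow> real \<Rightarrow> real \<Rightarrow> real" where
  "P_X n t \<phi> = (\<Sum>k\<in>{k. k \<le> n \<and> real k \<ge> real n * t}.
       real (n choose k) * \<phi> ^ k * (1 - \<phi>) ^ (n - k))"

definition P_CH :: "nat \<Rightarrow> real \<Rightarrow> real \<Rightarrow> real" where
  "P_CH n t \<phi> = (if t \<ge> \<phi> then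
       pw (\<phi> / t) (real n * t) * pw ((1 - \<phi>) / (1 - t)) (real n * (1 - t))
     else 1)"

definition P_PBR :: "nat \<Rightarrow> real \<Rightarrow> real \<Rightarrow> real" where
  "P_PBR n t \<phi> = (if t \<ge> \<phi> then
       pw \<phi> (real n * t) * pw (1 - \<phi>) (real n * (1 - t)) * (real n + 1)
         * real (n choose nat \<lfloor>real n * t\<rfloor>)
     else
       pw t (real n * t) * pw (1 - t) (real n * (1 - t)) * (real n + 1)
         * real (n choose nat \<lfloor>real n * t\<rfloor>))"

end

theory Submission
  imports Defs "HOL-Real_Asymp.Real_Asymp"
begin

text \<open>
  Let \<open>b\<^sub>p(k)\<close> be the probability of \<open>k\<close> successes in \<open>n\<close> trials with success probability \<open>p\<close>.
  At an attainable frequency \<open>t = k/n \<ge> \<phi>\<close> one has \<open>n KL t \<phi> = ln b\<^sub>t(k) - ln b\<^sub>\<phi>(k)\<close>, and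
  \<open>1/(n + 1) \<le> b\<^sub>t(k) \<le> 1\<close> because \<open>k\<close> is a mode of \<open>b\<^sub>t\<close>. Since \<open>P_CH = b\<^sub>\<phi>(k)/b\<^sub>t(k)\<close>,
  \<open>P_PBR = (n + 1) b\<^sub>\<phi>(k)\<close>, and \<open>b\<^sub>\<phi>(k) \<le> P_X \<le> (n + 1) b\<^sub>\<phi>(k)\<close> (as \<open>k \<ge> n\<phi>\<close> lies beyond the
  mode of \<open>b\<^sub>\<phi>\<close>), this gives \<open>\<bar>- ln P - n KL t \<phi>\<bar> \<le> ln (n + 1)\<close> for all three bounds.
  Expanding \<open>KL t \<phi>\<close> to second order around \<open>\<theta>\<close> with slope \<open>c = ln (\<theta>/(1 - \<theta>) \<cdot> (1 - \<phi>)/\<phi>)\<close>,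
  the statistic is \<open>c \<surd>n (\<Theta>\<^sub>n - \<theta>)\<close> up to an error \<open>O (ln n / \<surd>n + \<surd>n (\<Theta>\<^sub>n - \<theta>)\<^sup>2)\<close>, which
  is \<open>o(1)\<close> on the window \<open>\<bar>\<Theta>\<^sub>n - \<theta>\<bar> < n\<^sup>-\<^sup>1\<^sup>/\<^sup>3\<close>; by Hoeffding's inequality \<open>\<Theta>\<^sub>n\<close> leaves that
  window with probability at most \<open>2 exp (-2 n\<^sup>1\<^sup>/\<^sup>3)\<close>. The central limit theorem and Slutsky's lemma
  finish the proof.
\<close>

section \<open>Binomial probabilities\<close>

definition binom_prob :: "nat \<Rightarrow> real \<Rightarrow> nat \<Rightarrow> real" where
  "binom_prob n p k = real (n choose k) * p ^ k * (1 - p) ^ (n - k)"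

lemma binom_prob_nonneg: "0 \<le> p \<Longrightarrow> p \<le> 1 \<Longrightarrow> 0 \<le> binom_prob n p k"
  unfolding binom_prob_def by simp

lemma binom_prob_pos: "0 < p \<Longrightarrow> p < 1 \<or> k = n \<Longrightarrow> k \<le> n \<Longrightarrow> 0 < binom_prob n p k"
  unfolding binom_prob_def by (cases "k = n") auto

lemma sum_binom_prob: "(\<Sum>k\<le>n. binom_prob n p k) = 1"
  using binomial_ring[of p "1 - p" n] by (simp add: binom_prob_def)

lemma ln_binom_prob:
  assumes "0 < p" "p < 1 \<or> k = n" "k \<le> n"
  shows "ln (binom_prob n p k) = ln (real (n choose k)) + real k * ln p + real (n - k) * ln (1 - p)"
  using assms by (cases "k = n") (auto simp: binom_prob_def ln_mult ln_realpow)

lemma binom_prob_Suc: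
  assumes "k < n"
  shows "binom_prob n p (Suc k) * (real (Suc k) * (1 - p)) = binom_prob n p k * (real (n - k) * p)"
proof -
  have choose: "real (n choose Suc k) * real (Suc k) = real (n choose k) * real (n - k)"
    by (metis binomial_absorb_comp binomial_absorption mult.commute of_nat_mult)
  have n_minus_k: "n - k = Suc (n - Suc k)" using assms by simp
  have "binom_prob n p (Suc k) * (real (Suc k) * (1 - p))
        = (real (n choose Suc k) * real (Suc k)) * (p ^ k * p) * ((1 - p) ^ (n - Suc k) * (1 - p))"
    by (simp add: binom_prob_def algebra_simps)
  also have "\<dots> = (real (n choose k) * real (n - k)) * (p ^ k * p) * (1 - p) ^ (n - k)"
    by (simp only: choose n_minus_k power_Suc2)
  also have "\<dots> = binom_prob n p k * (real (n - k) * p)"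
    by (simp add: binom_prob_def algebra_simps)
  finally show ?thesis .
qed

lemma binom_prob_antimono:
  assumes p: "0 \<le> p" "p \<le> 1" and mode: "real n * p \<le> real k" and "k \<le> j" "j \<le> n"
  shows "binom_prob n p j \<le> binom_prob n p k"
  using \<open>k \<le> j\<close> \<open>j \<le> n\<close>
proof (induction j rule: dec_induct)
  case (step j)
  show ?case
  proof (cases "p = 1")
    case True
    then show ?thesis using mode step by simp
  next
    case False
    have "j < n" using step by simp
    have "real n * p \<le> real j" using mode step by simp
    then have ratio: "real (n - j) * p \<le> real (Suc j) * (1 - p)"
      using \<open>j < n\<close> p by (simp add: of_nat_diff algebra_simps)
    have "binom_prob n p (Suc j) * (real (Suc j) * (1 - p)) = binom_prob n p j * (real (n - j) * p)"
      by (rule binom_prob_Suc[OF \<open>j < n\<close>])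
    also have "\<dots> \<le> binom_prob n p j * (real (Suc j) * (1 - p))"
      by (intro mult_left_mono ratio binom_prob_nonneg p)
    finally have "binom_prob n p (Suc j) \<le> binom_prob n p j"
      using False p by (simp add: mult_le_cancel_right)
    then show ?thesis using step by simp
  qed
qed simp

lemma binom_prob_mono:
  assumes p: "0 \<le> p" "p \<le> 1" and mode: "real k \<le> real n * p" and "j \<le> k" "k \<le> n"
  shows "binom_prob n p j \<le> binom_prob n p k"
  using \<open>j \<le> k\<close>
proof (induction j rule: inc_induct)
  case (step j)
  have "j < n" using step \<open>k \<le> n\<close> by simp
  have "real (Suc j) \<le> real n * p" using mode step by simp
  then have ratio: "real (Suc j) * (1 - p) \<le> real (n - j) * p"
    using \<open>j < n\<close> p by (simp add: of_nat_diff algebra_simps)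
  have "0 < p" using \<open>real (Suc j) \<le> real n * p\<close> p by (cases "p = 0") auto
  have "binom_prob n p j * (real (n - j) * p) = binom_prob n p (Suc j) * (real (Suc j) * (1 - p))"
    by (rule binom_prob_Suc[OF \<open>j < n\<close>, symmetric])
  also have "\<dots> \<le> binom_prob n p (Suc j) * (real (n - j) * p)"
    by (intro mult_left_mono ratio binom_prob_nonneg p)
  finally have "binom_prob n p j \<le> binom_prob n p (Suc j)"
    using \<open>0 < p\<close> \<open>j < n\<close> by (simp add: mult_le_cancel_right)
  then show ?case using step by simp
qed simp

lemma binom_prob_empirical_mode:
  assumes "k \<le> n" "0 < n" "j \<le> n"
  shows "binom_prob n (real k / real n) j \<le> binom_prob n (real k / real n) k"
proof -
  have p: "0 \<le> real k / real n" "real k / real n \<le> 1" and mode: "real n * (real k / real n) = real k"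
    using assms by auto
  show ?thesis
  proof (cases "k \<le> j")
    case True
    then show ?thesis using binom_prob_antimono[OF p] mode assms by simp
  next
    case False
    then show ?thesis using binom_prob_mono[OF p] mode assms by simp
  qed
qed

text \<open>A mode of a distribution on \<open>n + 1\<close> points carries mass at least \<open>1/(n + 1)\<close>.\<close>

lemma binom_prob_empirical_mode_bounds:
  assumes "k \<le> n" "0 < n"
  shows "1 / (real n + 1) \<le> binom_prob n (real k / real n) k"
    and "binom_prob n (real k / real n) k \<le> 1"
proof -
  let ?p = "real k / real n"
  have p: "0 \<le> ?p" "?p \<le> 1" using assms by auto
  have "1 = (\<Sum>j\<le>n. binom_prob n ?p j)" by (simp add: sum_binom_prob)
  also have "\<dots> \<le> (\<Sum>j\<le>n. binom_prob n ?p k)"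
    by (intro sum_mono binom_prob_empirical_mode assms) auto
  also have "\<dots> = (real n + 1) * binom_prob n ?p k" by simp
  finally show "1 / (real n + 1) \<le> binom_prob n ?p k" by (simp add: field_simps)
  have "binom_prob n ?p k \<le> (\<Sum>j\<le>n. binom_prob n ?p j)"
    by (rule member_le_sum) (use assms binom_prob_nonneg[OF p] in auto)
  then show "binom_prob n ?p k \<le> 1" by (simp add: sum_binom_prob)
qed

section \<open>Kullback--Leibler divergence near \<open>\<theta>\<close>\<close>

lemma KL_eq_entropy_form:
  assumes "0 \<le> t" "t \<le> 1" "0 < \<phi>" "\<phi> < 1"
  shows "KL t \<phi> = t * ln t + (1 - t) * ln (1 - t) - t * ln \<phi> - (1 - t) * ln (1 - \<phi>)"
proof -
  have "t * ln (t / \<phi>) = t * ln t - t * ln \<phi>"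
    using assms by (cases "t = 0") (auto simp: ln_div algebra_simps)
  moreover have "(1 - t) * ln ((1 - t) / (1 - \<phi>)) = (1 - t) * ln (1 - t) - (1 - t) * ln (1 - \<phi>)"
    using assms by (cases "t = 1") (auto simp: ln_div algebra_simps)
  ultimately show ?thesis unfolding KL_def by simp
qed

text \<open>Both bounds come from \<open>1 - 1/x \<le> ln x \<le> x - 1\<close> at \<open>x = u/v\<close>.\<close>

lemma xlnx_taylor_bounds:
  fixes u v :: real
  assumes "0 \<le> u" "0 < v"
  shows "0 \<le> u * ln u - v * ln v - (ln v + 1) * (u - v)"
    and "u * ln u - v * ln v - (ln v + 1) * (u - v) \<le> (u - v)\<^sup>2 / v"
proof -
  have "0 \<le> u * ln u - v * ln v - (ln v + 1) * (u - v) \<and>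
        u * ln u - v * ln v - (ln v + 1) * (u - v) \<le> (u - v)\<^sup>2 / v"
  proof (cases "u = 0")
    case True
    then show ?thesis using assms by (simp add: power2_eq_square algebra_simps)
  next
    case False
    then have "0 < u" using assms by simp
    have remainder: "u * ln u - v * ln v - (ln v + 1) * (u - v) = u * ln (u / v) - (u - v)"
      using \<open>0 < u\<close> assms by (simp add: ln_div algebra_simps)
    have "ln (u / v) \<le> u / v - 1" using \<open>0 < u\<close> assms by (intro ln_le_minus_one) simp
    then have "u * ln (u / v) \<le> u * (u / v - 1)" using \<open>0 < u\<close> by (intro mult_left_mono) auto
    moreover have "u * (u / v - 1) - (u - v) = (u - v)\<^sup>2 / v"
      using assms by (simp add: field_simps power2_eq_square)
    moreover have "ln (v / u) \<le> v / u - 1" using \<open>0 < u\<close> assms by (intro ln_le_minus_one) simp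
    then have "u * (1 - v / u) \<le> u * ln (u / v)"
      using \<open>0 < u\<close> assms by (intro mult_left_mono) (auto simp: ln_div)
    moreover have "u * (1 - v / u) = u - v" using \<open>0 < u\<close> by (simp add: field_simps)
    ultimately show ?thesis using remainder by linarith
  qed
  then show "0 \<le> u * ln u - v * ln v - (ln v + 1) * (u - v)"
    and "u * ln u - v * ln v - (ln v + 1) * (u - v) \<le> (u - v)\<^sup>2 / v" by auto
qed

lemma KL_quadratic_approx:
  assumes t: "0 \<le> t" "t \<le> 1" and \<phi>: "0 < \<phi>" "\<phi> < 1" and \<theta>: "0 < \<theta>" "\<theta> < 1"
  shows "\<bar>KL t \<phi> - KL \<theta> \<phi> - ln (\<theta> / (1 - \<theta>) * ((1 - \<phi>) / \<phi>)) * (t - \<theta>)\<bar>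
           \<le> (t - \<theta>)\<^sup>2 * (1 / \<theta> + 1 / (1 - \<theta>))"
proof -
  have slope: "ln (\<theta> / (1 - \<theta>) * ((1 - \<phi>) / \<phi>)) = ln \<theta> - ln (1 - \<theta>) + ln (1 - \<phi>) - ln \<phi>"
    using \<phi> \<theta> by (simp add: ln_mult ln_div)
  have KL_\<theta>: "KL \<theta> \<phi> = \<theta> * ln \<theta> + (1 - \<theta>) * ln (1 - \<theta>) - \<theta> * ln \<phi> - (1 - \<theta>) * ln (1 - \<phi>)"
    using \<theta> \<phi> by (intro KL_eq_entropy_form) auto
  have "KL t \<phi> - KL \<theta> \<phi> - ln (\<theta> / (1 - \<theta>) * ((1 - \<phi>) / \<phi>)) * (t - \<theta>)
     = (t * ln t - \<theta> * ln \<theta> - (ln \<theta> + 1) * (t - \<theta>))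
     + ((1-t) * ln (1-t) - (1-\<theta>) * ln (1-\<theta>) - (ln (1-\<theta>) + 1) * ((1-t) - (1-\<theta>)))"
    unfolding slope KL_eq_entropy_form[OF t \<phi>] KL_\<theta> by (simp add: algebra_simps)
  moreover have "((1-t) - (1-\<theta>))\<^sup>2 = (t - \<theta>)\<^sup>2" by (simp add: power2_eq_square algebra_simps)
  moreover have "(t - \<theta>)\<^sup>2 * (1 / \<theta> + 1 / (1 - \<theta>)) = (t - \<theta>)\<^sup>2 / \<theta> + (t - \<theta>)\<^sup>2 / (1 - \<theta>)"
    by (simp add: algebra_simps)
  ultimately show ?thesis
    using xlnx_taylor_bounds[of t \<theta>] xlnx_taylor_bounds[of "1 - t" "1 - \<theta>"] t \<theta> by auto
qed

section \<open>Method of types\<close>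

lemma pw_of_nat: "0 \<le> x \<Longrightarrow> pw x (real m) = x ^ m"
  unfolding pw_def by (cases "x = 0") (auto simp: powr_realpow)

context
  fixes n k :: nat and \<phi> t :: real
  assumes n: "0 < n" and k: "k \<le> n" and \<phi>: "0 < \<phi>" "\<phi> < 1"
    and t: "t = real k / real n" and \<phi>_le_t: "\<phi> \<le> t"
begin

private lemma n_times_t: "real n * t = real k"
  using n t by simp

private lemma n_times_one_minus_t: "real n * (1 - t) = real (n - k)"
  using n k t by (simp add: of_nat_diff algebra_simps)

private lemma t_pos: "0 < t"
  using \<phi> \<phi>_le_t by simp

private lemma t_less_one: "t < 1 \<or> k = n"
  using n k t by (cases "k = n") auto

lemma n_KL_eq_ln_binom_prob_ratio: "real n * KL t \<phi> = ln (binom_prob n t k) - ln (binom_prob n \<phi> k)"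
proof -
  have "real n * KL t \<phi> = (real n * t) * ln t + (real n * (1 - t)) * ln (1 - t)
      - (real n * t) * ln \<phi> - (real n * (1 - t)) * ln (1 - \<phi>)"
    using t_pos t_less_one n k t \<phi> by (simp add: KL_eq_entropy_form algebra_simps)
  then show ?thesis
    unfolding n_times_t n_times_one_minus_t
    using ln_binom_prob[of t k n] ln_binom_prob[of \<phi> k n] t_pos t_less_one \<phi> k by simp
qed

private lemma ln_binom_prob_mode_bounds:
  "- ln (real n + 1) \<le> ln (binom_prob n t k)" "ln (binom_prob n t k) \<le> 0"
proof -
  have mode: "1 / (real n + 1) \<le> binom_prob n t k" "binom_prob n t k \<le> 1"
    unfolding t by (rule binom_prob_empirical_mode_bounds[OF k n])+
  have "ln (1 / (real n + 1)) \<le> ln (binom_prob n t k)"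
    using mode(1) by (intro ln_mono) auto
  then show "- ln (real n + 1) \<le> ln (binom_prob n t k)"
    by (simp add: ln_div)
  show "ln (binom_prob n t k) \<le> 0"
    using mode by (smt (verit) divide_pos_pos ln_le_zero_iff of_nat_less_0_iff)
qed

lemma ln_P_CH: "- ln (P_CH n t \<phi>) = real n * KL t \<phi>"
proof -
  have P: "P_CH n t \<phi> = (\<phi> / t) ^ k * ((1 - \<phi>) / (1 - t)) ^ (n - k)"
    unfolding P_CH_def n_times_t n_times_one_minus_t
    using \<phi>_le_t \<phi> t_pos t_less_one by (auto simp: pw_of_nat less_imp_le pw_def[of _ 0])
  have "real n * KL t \<phi> = (real n * t) * ln (t / \<phi>) + (real n * (1 - t)) * ln ((1 - t) / (1 - \<phi>))"
    unfolding KL_def by (simp add: algebra_simps)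
  also have "\<dots> = real k * ln (t / \<phi>) + real (n - k) * ln ((1 - t) / (1 - \<phi>))"
    unfolding n_times_t n_times_one_minus_t ..
  finally show ?thesis
    unfolding P using t_less_one t_pos \<phi> by (auto simp: ln_mult ln_realpow ln_div algebra_simps)
qed

lemma ln_P_PBR_approx: "\<bar>- ln (P_PBR n t \<phi>) - real n * KL t \<phi>\<bar> \<le> ln (real n + 1)"
proof -
  have "P_PBR n t \<phi> = binom_prob n \<phi> k * (real n + 1)"
    unfolding P_PBR_def binom_prob_def n_times_t n_times_one_minus_t
    using \<phi>_le_t \<phi> by (simp add: pw_of_nat)
  then have "- ln (P_PBR n t \<phi>) = - ln (binom_prob n \<phi> k) - ln (real n + 1)"
    using binom_prob_pos[of \<phi> k n] \<phi> k by (simp add: ln_mult)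
  moreover have "- ln (real n + 1) \<le> ln (binom_prob n t k)" "ln (binom_prob n t k) \<le> 0"
    by (fact ln_binom_prob_mode_bounds)+
  ultimately show ?thesis
    unfolding n_KL_eq_ln_binom_prob_ratio by simp
qed

text \<open>The terms of the upper tail beyond the mode \<open>n \<phi> \<le> k\<close> are at most the first one.\<close>

lemma ln_P_X_approx: "\<bar>- ln (P_X n t \<phi>) - real n * KL t \<phi>\<bar> \<le> ln (real n + 1)"
proof -
  have tail: "{j. j \<le> n \<and> real n * t \<le> real j} = {k..n}"
    unfolding n_times_t of_nat_le_iff by auto
  have P: "P_X n t \<phi> = (\<Sum>j\<in>{k..n}. binom_prob n \<phi> j)"
    unfolding P_X_def binom_prob_def tail ..
  have pos: "0 < binom_prob n \<phi> k"
    using binom_prob_pos \<phi> k by blast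
  have lower: "binom_prob n \<phi> k \<le> P_X n t \<phi>"
    unfolding P by (rule member_le_sum) (use k \<phi> binom_prob_nonneg in auto)
  have "real n * \<phi> \<le> real k"
    using mult_left_mono[OF \<phi>_le_t, of "real n"] n_times_t by simp
  then have "P_X n t \<phi> \<le> (\<Sum>j\<in>{k..n}. binom_prob n \<phi> k)"
    unfolding P using \<phi> by (intro sum_mono binom_prob_antimono) auto
  also have "\<dots> \<le> (real n + 1) * binom_prob n \<phi> k"
    using k pos by simp
  finally have upper: "P_X n t \<phi> \<le> (real n + 1) * binom_prob n \<phi> k" .
  have "ln (binom_prob n \<phi> k) \<le> ln (P_X n t \<phi>)"
    using lower pos by (intro ln_mono) auto
  moreover have "ln (P_X n t \<phi>) \<le> ln (real n + 1) + ln (binom_prob n \<phi> k)"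
    using ln_mono[OF upper] lower pos by (simp add: ln_mult)
  ultimately show ?thesis
    unfolding n_KL_eq_ln_binom_prob_ratio using ln_binom_prob_mode_bounds by linarith
qed

lemma ln_tail_bound_approx:
  assumes "P \<in> {P_CH, P_PBR, P_X}"
  shows "\<bar>- ln (P n t \<phi>) - real n * KL t \<phi>\<bar> \<le> ln (real n + 1)"
  using assms ln_P_CH ln_P_PBR_approx ln_P_X_approx by auto

end

section \<open>Linearisation of the statistic\<close>

lemma ln_odds_ratio_pos:
  fixes \<phi> \<theta> :: real
  assumes "0 < \<phi>" "\<phi> < \<theta>" "\<theta> < 1"
  shows "0 < ln (\<theta> / (1 - \<theta>) * ((1 - \<phi>) / \<phi>))"
proof -
  have "\<phi> * (1 - \<theta>) < \<theta> * (1 - \<phi>)" using assms by (simp add: algebra_simps)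
  then show ?thesis using assms by (simp add: field_simps)
qed

lemma tail_statistic_linearization:
  fixes P :: "nat \<Rightarrow> real \<Rightarrow> real \<Rightarrow> real"
  assumes n: "0 < n" and k: "k \<le> n" and \<phi>\<theta>: "0 < \<phi>" "\<phi> < \<theta>" "\<theta> < 1"
    and window: "\<bar>real k / real n - \<theta>\<bar> < e" "e \<le> \<theta> - \<phi>" and P: "P \<in> {P_CH, P_PBR, P_X}"
  shows "\<bar>sqrt (real n) * (- ln (P n (real k / real n) \<phi>) / real n - KL \<theta> \<phi>)
           - ln (\<theta> / (1 - \<theta>) * ((1 - \<phi>) / \<phi>)) * sqrt (real n) * (real k / real n - \<theta>)\<bar>
         \<le> sqrt (real n) * (ln (real n + 1) / real n + e\<^sup>2 * (1 / \<theta> + 1 / (1 - \<theta>)))"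
proof -
  define t where "t = real k / real n"
  define c where "c = ln (\<theta> / (1 - \<theta>) * ((1 - \<phi>) / \<phi>))"
  define C where "C = 1 / \<theta> + 1 / (1 - \<theta>)"
  have t01: "0 \<le> t" "t \<le> 1" using k n unfolding t_def by auto
  have types: "\<bar>- ln (P n t \<phi>) - real n * KL t \<phi>\<bar> \<le> ln (real n + 1)"
    using window \<phi>\<theta> by (intro ln_tail_bound_approx[OF n k _ _ t_def _ P]) (auto simp: t_def)
  have taylor: "\<bar>KL t \<phi> - KL \<theta> \<phi> - c * (t - \<theta>)\<bar> \<le> (t - \<theta>)\<^sup>2 * C"
    unfolding c_def C_def by (rule KL_quadratic_approx) (use t01 \<phi>\<theta> in auto)
  have "\<bar>t - \<theta>\<bar>\<^sup>2 \<le> e\<^sup>2"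
    using window unfolding t_def by (intro power_mono) auto
  then have "(t - \<theta>)\<^sup>2 \<le> e\<^sup>2" by simp
  moreover have "0 \<le> C" unfolding C_def using \<phi>\<theta> by simp
  ultimately have "(t - \<theta>)\<^sup>2 * C \<le> e\<^sup>2 * C" by (rule mult_right_mono)
  moreover have "\<bar>(- ln (P n t \<phi>) - real n * KL t \<phi>) / real n\<bar> \<le> ln (real n + 1) / real n"
    using types n by (simp add: abs_divide divide_right_mono)
  ultimately have "\<bar>(- ln (P n t \<phi>) - real n * KL t \<phi>) / real n + (KL t \<phi> - KL \<theta> \<phi> - c * (t - \<theta>))\<bar>
        \<le> ln (real n + 1) / real n + e\<^sup>2 * C"
    using taylor by linarith
  then have "sqrt (real n) * \<bar>(- ln (P n t \<phi>) - real n * KL t \<phi>) / real n + (KL t \<phi> - KL \<theta> \<phi> - c * (t - \<theta>))\<bar>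
      \<le> sqrt (real n) * (ln (real n + 1) / real n + e\<^sup>2 * C)"
    by (intro mult_left_mono) auto
  moreover have "sqrt (real n) * (- ln (P n t \<phi>) / real n - KL \<theta> \<phi>) - c * sqrt (real n) * (t - \<theta>)
     = sqrt (real n) * ((- ln (P n t \<phi>) - real n * KL t \<phi>) / real n + (KL t \<phi> - KL \<theta> \<phi> - c * (t - \<theta>)))"
    using n by (simp add: field_simps)
  ultimately show ?thesis
    unfolding t_def[symmetric] c_def[symmetric] C_def[symmetric] by (simp add: abs_mult)
qed

lemma eventually_tail_statistic_linearization:
  fixes P :: "nat \<Rightarrow> real \<Rightarrow> real \<Rightarrow> real"
  assumes \<phi>\<theta>: "0 < \<phi>" "\<phi> < \<theta>" "\<theta> < 1" and P: "P \<in> {P_CH, P_PBR, P_X}"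
  obtains r where "r \<longlonglongrightarrow> 0"
    and "\<forall>\<^sub>F n in sequentially. \<forall>k\<le>n. \<bar>real k / real n - \<theta>\<bar> < real n powr (-1/3) \<longrightarrow>
           \<bar>sqrt (real n) * (- ln (P n (real k / real n) \<phi>) / real n - KL \<theta> \<phi>)
             - ln (\<theta> / (1 - \<theta>) * ((1 - \<phi>) / \<phi>)) * sqrt (real n) * (real k / real n - \<theta>)\<bar> \<le> r n"
proof
  define C where "C = 1 / \<theta> + 1 / (1 - \<theta>)"
  show "(\<lambda>n. sqrt (real n) * (ln (real n + 1) / real n + (real n powr (-1/3))\<^sup>2 * C)) \<longlonglongrightarrow> 0"
    by real_asymp
  have "\<forall>\<^sub>F n in sequentially. real n powr (-1/3) < \<theta> - \<phi>"
    using \<phi>\<theta> by (intro order_tendstoD(2)) (real_asymp, simp)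
  then show "\<forall>\<^sub>F n in sequentially. \<forall>k\<le>n. \<bar>real k / real n - \<theta>\<bar> < real n powr (-1/3) \<longrightarrow>
           \<bar>sqrt (real n) * (- ln (P n (real k / real n) \<phi>) / real n - KL \<theta> \<phi>)
             - ln (\<theta> / (1 - \<theta>) * ((1 - \<phi>) / \<phi>)) * sqrt (real n) * (real k / real n - \<theta>)\<bar>
           \<le> sqrt (real n) * (ln (real n + 1) / real n + (real n powr (-1/3))\<^sup>2 * C)"
    using eventually_gt_at_top[of 0]
  proof eventually_elim
    case (elim n)
    show ?case
      unfolding C_def using elim
      by (intro allI impI tail_statistic_linearization[OF _ _ \<phi>\<theta> _ _ P]) auto
  qed
qed

section \<open>Slutsky's lemma for a centred normal limit\<close>

lemma (in prob_space) cdf_distr_borel: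
  assumes "f \<in> borel_measurable M"
  shows "cdf (distr M borel f) y = prob {x\<in>space M. f x \<le> y}"
proof -
  have "cdf (distr M borel f) y = prob (f -` {..y} \<inter> space M)"
    unfolding cdf_def using assms by (rule measure_distr) auto
  also have "f -` {..y} \<inter> space M = {x\<in>space M. f x \<le> y}" by auto
  finally show ?thesis .
qed

lemma isCont_std_normal_cdf: "isCont (cdf std_normal_distribution) x"
proof -
  interpret real_distribution std_normal_distribution by (rule real_dist_normal_dist)
  have "AE y in lborel. y \<in> {x} \<longrightarrow> ennreal (std_normal_density y) = 0"
    using AE_lborel_singleton[of x] by (rule eventually_mono) auto
  then have "{x} \<in> null_sets std_normal_distribution"
    by (subst null_sets_density_iff) auto
  then show ?thesis by (simp add: isCont_cdf measure_def null_setsD1)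
qed

lemma cdf_normal_density:
  assumes a: "0 < a"
  shows "cdf (density lborel (normal_density 0 a)) x = cdf std_normal_distribution (x / a)"
proof -
  interpret S: prob_space std_normal_distribution
    using real_dist_normal_dist real_distribution_def by blast
  have sets: "sets std_normal_distribution = sets lborel" by simp
  have "distributed std_normal_distribution lborel (\<lambda>x. x) std_normal_density"
    unfolding distributed_def using sets by (auto simp: distr_id2)
  then have "distributed std_normal_distribution lborel (\<lambda>y. 0 + a * y) (normal_density (0 + a * 0) (\<bar>a\<bar> * 1))"
    by (rule S.normal_density_affine) (use a in auto)
  then have scaled: "density lborel (normal_density 0 a) = distr std_normal_distribution borel (\<lambda>y. a * y)"
    unfolding distributed_def using a by (simp cong: distr_cong)
  have "(\<lambda>y. a * y) \<in> borel_measurable std_normal_distribution"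
    by (subst measurable_cong_sets[OF sets refl]) simp
  then have "cdf (density lborel (normal_density 0 a)) x
      = measure std_normal_distribution {y\<in>space std_normal_distribution. a * y \<le> x}"
    unfolding scaled by (rule S.cdf_distr_borel)
  also have "{y\<in>space std_normal_distribution. a * y \<le> x} = {..x / a}"
    using a sets_eq_imp_space_eq[OF sets] by (auto simp: field_simps)
  finally show ?thesis unfolding cdf_def .
qed

lemma tendsto_squeezed_by_shifts:
  fixes F :: "nat \<Rightarrow> real \<Rightarrow> real" and H :: "nat \<Rightarrow> real" and p :: "real \<Rightarrow> nat \<Rightarrow> real"
  assumes cont: "isCont G z" and F: "\<And>y. (\<lambda>n. F n y) \<longlonglongrightarrow> G y"
    and p: "\<And>d. 0 < d \<Longrightarrow> p d \<longlonglongrightarrow> 0"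
    and lower: "\<And>n d. 0 < d \<Longrightarrow> F n (z - d) \<le> H n + p d n"
    and upper: "\<And>n d. 0 < d \<Longrightarrow> H n \<le> F n (z + d) + p d n"
  shows "H \<longlonglongrightarrow> G z"
proof (rule LIMSEQ_I)
  fix r :: real assume "0 < r"
  obtain s where "0 < s" and s: "\<And>y. \<bar>y - z\<bar> < s \<Longrightarrow> \<bar>G y - G z\<bar> < r / 2"
    using cont \<open>0 < r\<close> unfolding continuous_at_eps_delta dist_real_def by (meson half_gt_zero)
  define d where "d = s / 2"
  have "0 < d" and G_shifts: "\<bar>G (z + d) - G z\<bar> < r / 2" "\<bar>G (z - d) - G z\<bar> < r / 2"
    using \<open>0 < s\<close> s[of "z + d"] s[of "z - d"] by (auto simp: d_def)
  have "\<forall>\<^sub>F n in sequentially. \<bar>F n (z + d) - G (z + d)\<bar> < r / 4"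
    "\<forall>\<^sub>F n in sequentially. \<bar>F n (z - d) - G (z - d)\<bar> < r / 4"
    "\<forall>\<^sub>F n in sequentially. \<bar>p d n\<bar> < r / 4"
    using F[of "z + d", THEN tendstoD, of "r / 4"] F[of "z - d", THEN tendstoD, of "r / 4"]
      p[OF \<open>0 < d\<close>, THEN tendstoD, of "r / 4"] \<open>0 < r\<close>
    by (auto simp: dist_real_def)
  then have "\<forall>\<^sub>F n in sequentially. \<bar>H n - G z\<bar> < r"
  proof eventually_elim
    case (elim n)
    then show ?case
      using lower[OF \<open>0 < d\<close>, of n] upper[OF \<open>0 < d\<close>, of n] G_shifts by linarith
  qed
  then show "\<exists>N. \<forall>n\<ge>N. norm (H n - G z) < r"
    by (simp add: eventually_sequentially)
qed

lemma (in prob_space) prob_le_le_perturbed: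
  fixes S T D :: "'a \<Rightarrow> real"
  assumes [measurable]: "S \<in> borel_measurable M" "T \<in> borel_measurable M" "D \<in> borel_measurable M"
    and close: "\<And>x. x \<in> space M \<Longrightarrow> D x \<le> e \<Longrightarrow> S x \<le> u \<Longrightarrow> T x \<le> v"
  shows "prob {x\<in>space M. S x \<le> u} \<le> prob {x\<in>space M. T x \<le> v} + prob {x\<in>space M. e < D x}"
proof -
  have "prob {x\<in>space M. S x \<le> u} \<le> prob ({x\<in>space M. T x \<le> v} \<union> {x\<in>space M. e < D x})"
    using close by (intro finite_measure_mono) (auto simp: not_less[symmetric])
  also have "\<dots> \<le> prob {x\<in>space M. T x \<le> v} + prob {x\<in>space M. e < D x}"
    by (intro measure_Un_le) measurable
  finally show ?thesis .
qed

lemma (in prob_space) weak_conv_m_normal_of_close_to_scaled: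
  assumes "0 < a"
    and [measurable]: "\<And>n. Z n \<in> borel_measurable M" "\<And>n. T n \<in> borel_measurable M"
    and Z: "weak_conv_m (\<lambda>n. distr M borel (Z n)) std_normal_distribution"
    and close: "\<And>\<epsilon>. 0 < \<epsilon> \<Longrightarrow> (\<lambda>n. prob {x\<in>space M. \<epsilon> < \<bar>T n x - a * Z n x\<bar>}) \<longlonglongrightarrow> 0"
  shows "weak_conv_m (\<lambda>n. distr M borel (T n)) (density lborel (normal_density 0 a))"
proof -
  have "(\<lambda>n. prob {x\<in>space M. T n x \<le> y}) \<longlonglongrightarrow> cdf std_normal_distribution (y / a)" for y
  proof (rule tendsto_squeezed_by_shifts[OF isCont_std_normal_cdf,
        where F = "\<lambda>n u. prob {x\<in>space M. Z n x \<le> u}"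
          and p = "\<lambda>d n. prob {x\<in>space M. a * d < \<bar>T n x - a * Z n x\<bar>}"])
    show "(\<lambda>n. prob {x\<in>space M. Z n x \<le> u}) \<longlonglongrightarrow> cdf std_normal_distribution u" for u
      using Z isCont_std_normal_cdf[of u] by (simp add: weak_conv_m_def weak_conv_def cdf_distr_borel)
    show "(\<lambda>n. prob {x\<in>space M. a * d < \<bar>T n x - a * Z n x\<bar>}) \<longlonglongrightarrow> 0" if "0 < d" for d
      using close that \<open>0 < a\<close> by simp
    show "prob {x\<in>space M. Z n x \<le> y / a - d}
        \<le> prob {x\<in>space M. T n x \<le> y} + prob {x\<in>space M. a * d < \<bar>T n x - a * Z n x\<bar>}" for n d
    proof (rule prob_le_le_perturbed[where D = "\<lambda>x. \<bar>T n x - a * Z n x\<bar>"])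
      fix x assume "\<bar>T n x - a * Z n x\<bar> \<le> a * d" and "Z n x \<le> y / a - d"
      then have "(Z n x + d) * a \<le> y" "T n x \<le> a * Z n x + a * d"
        using \<open>0 < a\<close> by (simp_all add: field_simps abs_le_iff)
      then show "T n x \<le> y" by (simp add: algebra_simps)
    qed measurable
    show "prob {x\<in>space M. T n x \<le> y}
        \<le> prob {x\<in>space M. Z n x \<le> y / a + d} + prob {x\<in>space M. a * d < \<bar>T n x - a * Z n x\<bar>}" for n d
    proof (rule prob_le_le_perturbed[where D = "\<lambda>x. \<bar>T n x - a * Z n x\<bar>"])
      fix x assume "\<bar>T n x - a * Z n x\<bar> \<le> a * d" and "T n x \<le> y"
      then have "(Z n x - d) * a \<le> y" by (simp add: abs_le_iff algebra_simps)
      then show "Z n x \<le> y / a + d" using \<open>0 < a\<close> by (simp add: field_simps)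
    qed measurable
  qed
  then show ?thesis
    by (simp add: weak_conv_m_def weak_conv_def cdf_distr_borel cdf_normal_density[OF \<open>0 < a\<close>])
qed

section \<open>Sample means of Bernoulli trials\<close>

lemma measurable_comp_finite_range:
  fixes f :: "'a \<Rightarrow> real" and g :: "real \<Rightarrow> real"
  assumes f: "f \<in> borel_measurable M" and V: "finite V" and range: "\<And>x. x \<in> space M \<Longrightarrow> f x \<in> V"
  shows "(\<lambda>x. g (f x)) \<in> borel_measurable M"
proof -
  have "(\<lambda>x. \<Sum>v\<in>V. if f x = v then g v else 0) \<in> borel_measurable M"
    using f by measurable
  moreover have "(\<Sum>v\<in>V. if f x = v then g v else 0) = g (f x)" if "x \<in> space M" for x
    using range[OF that] V by (simp add: sum.delta')
  ultimately show ?thesis by (rule measurable_cong[THEN iffD1, rotated]) auto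
qed

lemma (in prob_space) indep_sets_reindex:
  assumes "indep_sets F (f ` I)" "inj_on f I"
  shows "indep_sets (\<lambda>i. F (f i)) I"
proof (rule indep_setsI)
  fix i assume "i \<in> I" then show "F (f i) \<subseteq> events"
    using assms(1) unfolding indep_sets_def by auto
next
  fix A J assume J: "J \<noteq> {}" "J \<subseteq> I" "finite J" and A: "\<forall>j\<in>J. A j \<in> F (f j)"
  define A' where "A' y = A (the_inv_into J f y)" for y
  have inj: "inj_on f J" using assms(2) J(2) by (rule inj_on_subset)
  have A'f: "A' (f j) = A j" if "j \<in> J" for j
    unfolding A'_def using the_inv_into_f_f[OF inj that] by simp
  have "prob (\<Inter>y\<in>f ` J. A' y) = (\<Prod>y\<in>f ` J. prob (A' y))"
    by (rule indep_setsD[OF assms(1)]) (use J A A'f in auto)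
  moreover have "(\<Inter>y\<in>f ` J. A' y) = (\<Inter>j\<in>J. A j)" using A'f by auto
  moreover have "(\<Prod>y\<in>f ` J. prob (A' y)) = (\<Prod>j\<in>J. prob (A j))"
    by (subst prod.reindex[OF inj]) (simp add: A'f)
  ultimately show "prob (\<Inter>j\<in>J. A j) = (\<Prod>j\<in>J. prob (A j))" by simp
qed

lemma (in prob_space) indep_vars_reindex:
  assumes "indep_vars M' X (f ` I)" "inj_on f I"
  shows "indep_vars (\<lambda>i. M' (f i)) (\<lambda>i. X (f i)) I"
  using assms unfolding indep_vars_def
  by (auto intro: indep_sets_reindex[where F="\<lambda>i. sigma_sets (space M) {X i -` A \<inter> space M |A. A \<in> sets (M' i)}", simplified])

definition sample_mean :: "(nat \<Rightarrow> 'a \<Rightarrow> bool) \<Rightarrow> nat \<Rightarrow> 'a \<Rightarrow> real" where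
  "sample_mean B n x = (\<Sum>i=1..n. of_bool (B i x)) / real n"

lemma sample_mean_on_grid: "sample_mean B n x \<in> (\<lambda>k. real k / real n) ` {..n}"
proof -
  have "card ({1..n} \<inter> {i. B i x}) \<le> n"
    using card_mono[of "{1..n}" "{1..n} \<inter> {i. B i x}"] by simp
  then show ?thesis
    unfolding sample_mean_def by (intro image_eqI[OF _ atMost_iff[THEN iffD2]]) simp_all
qed

lemma far_from_linearization_subset_window:
  fixes g :: "nat \<Rightarrow> real \<Rightarrow> real"
  assumes linear: "\<forall>k\<le>n. \<bar>real k / real n - \<theta>\<bar> < w \<longrightarrow>
           \<bar>g n (real k / real n) - c * sqrt (real n) * (real k / real n - \<theta>)\<bar> \<le> r"
    and "r < \<epsilon>"
  shows "{x\<in>space M. \<epsilon> < \<bar>g n (sample_mean B n x) - c * sqrt (real n) * (sample_mean B n x - \<theta>)\<bar>}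
           \<subseteq> {x\<in>space M. w \<le> \<bar>sample_mean B n x - \<theta>\<bar>}"
proof safe
  fix x assume far: "\<epsilon> < \<bar>g n (sample_mean B n x) - c * sqrt (real n) * (sample_mean B n x - \<theta>)\<bar>"
  obtain k where "k \<le> n" and k: "sample_mean B n x = real k / real n"
    using sample_mean_on_grid[of B n x] by auto
  show "w \<le> \<bar>sample_mean B n x - \<theta>\<bar>"
  proof (rule ccontr)
    assume "\<not> w \<le> \<bar>sample_mean B n x - \<theta>\<bar>"
    then have "\<bar>g n (real k / real n) - c * sqrt (real n) * (real k / real n - \<theta>)\<bar> \<le> r"
      using linear \<open>k \<le> n\<close> unfolding k by auto
    then show False using far \<open>r < \<epsilon>\<close> unfolding k by linarith
  qed
qed

context prob_space
begin

context
  fixes B :: "nat \<Rightarrow> 'a \<Rightarrow> bool" and \<theta> :: real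
  assumes \<theta>: "0 < \<theta>" "\<theta> < 1"
    and indep: "indep_vars (\<lambda>_. count_space UNIV) B UNIV"
    and bernoulli: "\<And>i. distr M (count_space UNIV) (B i) = measure_pmf (bernoulli_pmf \<theta>)"
begin

lemma measurable_bernoulli_seq[measurable]: "B i \<in> measurable M (count_space UNIV)"
  using indep unfolding indep_vars_def2 by auto

lemma measurable_sample_mean[measurable]: "sample_mean B n \<in> borel_measurable M"
  unfolding sample_mean_def by measurable

lemma expectation_bernoulli_seq: "expectation (\<lambda>x. h (B i x)) = \<theta> * h True + (1 - \<theta>) * h False"
proof -
  have "expectation (\<lambda>x. h (B i x)) = integral\<^sup>L (distr M (count_space UNIV) (B i)) h"
    by (rule integral_distr[symmetric]) auto
  also have "\<dots> = (\<Sum>b\<in>UNIV. h b * pmf (bernoulli_pmf \<theta>) b)"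
    unfolding bernoulli by (rule integral_measure_pmf_real) auto
  also have "\<dots> = \<theta> * h True + (1 - \<theta>) * h False"
    using \<theta> by (simp add: UNIV_bool)
  finally show ?thesis .
qed

lemma distr_indicator_bernoulli_seq:
  "distr M borel (\<lambda>x. of_bool (B i x) :: real) = distr (measure_pmf (bernoulli_pmf \<theta>)) borel of_bool"
  using distr_distr[of "of_bool :: bool \<Rightarrow> real" "count_space UNIV" borel "B i" M]
  by (simp add: bernoulli comp_def)

lemma indep_indicators_bernoulli_seq: "indep_vars (\<lambda>_. borel) (\<lambda>i x. of_bool (B i x) :: real) UNIV"
  using indep by (rule indep_vars_compose2) auto

lemma weak_conv_m_sample_mean_standardized:
  "weak_conv_m (\<lambda>n. distr M borel (\<lambda>x. sqrt (real n) * (sample_mean B n x - \<theta>) / sqrt (\<theta> * (1 - \<theta>))))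
     std_normal_distribution"
proof -
  \<comment> \<open>The library's central limit theorem sums over \<open>i < n\<close>, so the trials are shifted by one.\<close>
  let ?X = "\<lambda>i x. of_bool (B (Suc i) x) :: real"
  have "indep_vars (\<lambda>_. borel) (\<lambda>i x. of_bool (B i x) :: real) (range Suc)"
    using indep_indicators_bernoulli_seq by (rule indep_vars_subset) auto
  then have indep_X: "indep_vars (\<lambda>_. borel) ?X UNIV"
    using indep_vars_reindex[of "\<lambda>_. borel" _ Suc UNIV] by simp
  have mean: "expectation (?X n) = \<theta>" for n
    using expectation_bernoulli_seq[of "\<lambda>b. of_bool b"] by simp
  have variance: "variance (?X n) = (sqrt (\<theta> * (1 - \<theta>)))\<^sup>2" for n
    using expectation_bernoulli_seq[of "\<lambda>b. (of_bool b - \<theta>)\<^sup>2"] mean \<theta>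
    by (simp add: power2_eq_square algebra_simps)
  have square_integrable: "integrable M (\<lambda>x. (?X n x)\<^sup>2)" for n
    by (rule integrable_const_bound[where B = 1]) auto
  have "0 < sqrt (\<theta> * (1 - \<theta>))" using \<theta> by simp
  from central_limit_theorem[OF indep_X mean this square_integrable variance distr_indicator_bernoulli_seq]
  have "weak_conv_m (\<lambda>n. distr M borel (\<lambda>x. (\<Sum>i<n. ?X i x - \<theta>) / sqrt (real n * (sqrt (\<theta> * (1 - \<theta>)))\<^sup>2)))
      std_normal_distribution" .
  moreover have "(\<Sum>i<n. ?X i x - \<theta>) / sqrt (real n * (sqrt (\<theta> * (1 - \<theta>)))\<^sup>2)
      = sqrt (real n) * (sample_mean B n x - \<theta>) / sqrt (\<theta> * (1 - \<theta>))" for n x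
  proof (cases "n = 0")
    case False
    have "(\<Sum>i<n. ?X i x) = (\<Sum>i=1..n. of_bool (B i x))"
      by (rule sum_bounds_lt_plus1[of "\<lambda>i. of_bool (B i x)"])
    then have "(\<Sum>i<n. ?X i x - \<theta>) = real n * (sample_mean B n x - \<theta>)"
      unfolding sum_subtractf sample_mean_def using False by (simp add: field_simps)
    moreover have "sqrt (real n * (sqrt (\<theta> * (1 - \<theta>)))\<^sup>2) = sqrt (real n) * sqrt (\<theta> * (1 - \<theta>))"
      using \<theta> by (simp add: real_sqrt_mult)
    moreover have "real n * w / (sqrt (real n) * s) = sqrt (real n) * w / s" for w s :: real
      using False by (simp add: real_div_sqrt flip: times_divide_times_eq)
    ultimately show ?thesis by simp
  qed simp
  ultimately show ?thesis by (simp only:)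
qed

lemma hoeffding_sample_mean:
  assumes "0 < n" "0 \<le> e"
  shows "prob {x\<in>space M. e \<le> \<bar>sample_mean B n x - \<theta>\<bar>} \<le> 2 * exp (- 2 * real n * e\<^sup>2)"
proof -
  let ?X = "\<lambda>i x. of_bool (B i x) :: real"
  interpret Hoeffding_ineq_iid M "{1..n}" ?X "?X 1" 0 1 "expectation (?X 1)"
  proof unfold_locales
    show "indep_vars (\<lambda>_. borel) ?X {1..n}"
      using indep_indicators_bernoulli_seq by (rule indep_vars_subset) auto
    show "distr M borel (?X i) = distr M borel (?X 1)" for i
      by (simp only: distr_indicator_bernoulli_seq)
  qed auto
  have "expectation (?X 1) = \<theta>"
    using expectation_bernoulli_seq[of "\<lambda>b. of_bool b" 1] by simp
  moreover have "{1..n} \<noteq> {}" and "real (card {1..n}) = real n" using assms by simp_all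
  ultimately have "prob {x\<in>space M. e \<le> \<bar>(\<Sum>i\<in>{1..n}. ?X i x) / real n - \<theta>\<bar>}
      \<le> 2 * exp (- 2 * real n * e\<^sup>2 / (1 - 0)\<^sup>2)"
    using Hoeffding_ineq_abs_ge'[OF \<open>0 \<le> e\<close> zero_less_one] by (simp only: not_False_eq_True)
  then show ?thesis
    unfolding sample_mean_def by simp
qed

lemma prob_sample_mean_outside_window_tendsto_zero:
  "(\<lambda>n. prob {x\<in>space M. real n powr (-1/3) \<le> \<bar>sample_mean B n x - \<theta>\<bar>}) \<longlonglongrightarrow> 0"
proof (rule tendsto_sandwich[OF _ _ tendsto_const])
  show "(\<lambda>n. 2 * exp (- 2 * real n * (real n powr (-1/3))\<^sup>2)) \<longlonglongrightarrow> 0"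
    by real_asymp
  show "\<forall>\<^sub>F n in sequentially. prob {x\<in>space M. real n powr (-1/3) \<le> \<bar>sample_mean B n x - \<theta>\<bar>}
          \<le> 2 * exp (- 2 * real n * (real n powr (-1/3))\<^sup>2)"
    using eventually_gt_at_top[of 0] by eventually_elim (rule hoeffding_sample_mean, auto)
qed simp

lemma weak_conv_m_plug_in_statistic:
  fixes g :: "nat \<Rightarrow> real \<Rightarrow> real"
  assumes "0 < c" and "r \<longlonglongrightarrow> 0"
    and linear: "\<forall>\<^sub>F n in sequentially. \<forall>k\<le>n. \<bar>real k / real n - \<theta>\<bar> < real n powr (-1/3) \<longrightarrow>
           \<bar>g n (real k / real n) - c * sqrt (real n) * (real k / real n - \<theta>)\<bar> \<le> r n"
  shows "weak_conv_m (\<lambda>n. distr M borel (\<lambda>x. g n (sample_mean B n x)))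
           (density lborel (normal_density 0 (sqrt (\<theta> * (1 - \<theta>)) * c)))"
proof (rule weak_conv_m_normal_of_close_to_scaled
    [where Z = "\<lambda>n x. sqrt (real n) * (sample_mean B n x - \<theta>) / sqrt (\<theta> * (1 - \<theta>))"])
  have "0 < sqrt (\<theta> * (1 - \<theta>))" using \<theta> by simp
  then show "0 < sqrt (\<theta> * (1 - \<theta>)) * c" using \<open>0 < c\<close> by simp
  have scaled: "sqrt (\<theta> * (1 - \<theta>)) * c * (sqrt (real n) * (sample_mean B n x - \<theta>) / sqrt (\<theta> * (1 - \<theta>)))
      = c * sqrt (real n) * (sample_mean B n x - \<theta>)" for n x
    using \<theta> by simp
  show "(\<lambda>x. g n (sample_mean B n x)) \<in> borel_measurable M" for n
    by (rule measurable_comp_finite_range[OF measurable_sample_mean _ sample_mean_on_grid]) simp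
  show "(\<lambda>n. prob {x\<in>space M. \<epsilon> < \<bar>g n (sample_mean B n x) - sqrt (\<theta> * (1 - \<theta>)) * c *
      (sqrt (real n) * (sample_mean B n x - \<theta>) / sqrt (\<theta> * (1 - \<theta>)))\<bar>}) \<longlonglongrightarrow> 0"
    if "0 < \<epsilon>" for \<epsilon>
  proof (rule tendsto_sandwich[OF _ _ tendsto_const prob_sample_mean_outside_window_tendsto_zero])
    have "\<forall>\<^sub>F n in sequentially. r n < \<epsilon>"
      using \<open>r \<longlonglongrightarrow> 0\<close> \<open>0 < \<epsilon>\<close> by (rule order_tendstoD)
    with linear show "\<forall>\<^sub>F n in sequentially.
        prob {x\<in>space M. \<epsilon> < \<bar>g n (sample_mean B n x) - sqrt (\<theta> * (1 - \<theta>)) * c *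
          (sqrt (real n) * (sample_mean B n x - \<theta>) / sqrt (\<theta> * (1 - \<theta>)))\<bar>}
        \<le> prob {x\<in>space M. real n powr (-1/3) \<le> \<bar>sample_mean B n x - \<theta>\<bar>}"
    proof eventually_elim
      case (elim n)
      have "{x\<in>space M. \<epsilon> < \<bar>g n (sample_mean B n x) - c * sqrt (real n) * (sample_mean B n x - \<theta>)\<bar>}
          \<subseteq> {x\<in>space M. real n powr (-1/3) \<le> \<bar>sample_mean B n x - \<theta>\<bar>}"
        using elim by (rule far_from_linearization_subset_window)
      then show ?case
        unfolding scaled by (intro finite_measure_mono) measurable
    qed
  qed simp
  show "(\<lambda>x. sqrt (real n) * (sample_mean B n x - \<theta>) / sqrt (\<theta> * (1 - \<theta>))) \<in> borel_measurable M"
    for n by measurable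
qed (fact weak_conv_m_sample_mean_standardized)

lemma weak_conv_m_tail_statistic:
  assumes \<phi>: "0 < \<phi>" "\<phi> < \<theta>" and P: "P \<in> {P_CH, P_PBR, P_X}"
  shows "weak_conv_m
    (\<lambda>n. distr M borel (\<lambda>x. sqrt (real n) * (- ln (P n (sample_mean B n x) \<phi>) / real n - KL \<theta> \<phi>)))
    (density lborel (normal_density 0 (sqrt (\<theta> * (1 - \<theta>)) * ln (\<theta> / (1 - \<theta>) * ((1 - \<phi>) / \<phi>)))))"
proof -
  obtain r where "r \<longlonglongrightarrow> 0" and linear: "\<forall>\<^sub>F n in sequentially. \<forall>k\<le>n.
      \<bar>real k / real n - \<theta>\<bar> < real n powr (-1/3) \<longrightarrow>
      \<bar>sqrt (real n) * (- ln (P n (real k / real n) \<phi>) / real n - KL \<theta> \<phi>)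
        - ln (\<theta> / (1 - \<theta>) * ((1 - \<phi>) / \<phi>)) * sqrt (real n) * (real k / real n - \<theta>)\<bar> \<le> r n"
    by (rule eventually_tail_statistic_linearization[OF \<phi> \<theta>(2) P])
  show ?thesis
    by (rule weak_conv_m_plug_in_statistic[OF ln_odds_ratio_pos[OF \<phi> \<theta>(2)] \<open>r \<longlonglongrightarrow> 0\<close> linear])
qed

end

end

theorem theorem3:
  fixes M :: "'a measure" and B :: "nat \<Rightarrow> 'a \<Rightarrow> bool" and \<phi> \<theta> :: real
  assumes "prob_space M"
    and "0 < \<phi>" and "\<phi> < \<theta>" and "\<theta> < 1"
    and "prob_space.indep_vars M (\<lambda>_. count_space UNIV) B UNIV"
    and "\<And>i. distr M (count_space UNIV) (B i) = measure_pmf (bernoulli_pmf \<theta>)"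
  shows "\<forall>P \<in> {P_CH, P_PBR, P_X}.
    weak_conv_m
      (\<lambda>n. distr M borel (\<lambda>x.
          let \<Theta> = (\<Sum>i=1..n. of_bool (B i x)) / real n
          in sqrt (real n) * (- ln (P n \<Theta> \<phi>) / real n - KL \<theta> \<phi>)))
      (density lborel (normal_density 0
         (sqrt (\<theta> * (1 - \<theta>) * (ln (\<theta> / (1 - \<theta>) * ((1 - \<phi>) / \<phi>)))\<^sup>2))))"
proof -
  interpret prob_space M by fact
  have "sqrt (\<theta> * (1 - \<theta>) * (ln (\<theta> / (1 - \<theta>) * ((1 - \<phi>) / \<phi>)))\<^sup>2)
      = sqrt (\<theta> * (1 - \<theta>)) * ln (\<theta> / (1 - \<theta>) * ((1 - \<phi>) / \<phi>))"
    using ln_odds_ratio_pos[OF assms(2-4)] by (simp add: real_sqrt_mult)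
  moreover have "weak_conv_m
      (\<lambda>n. distr M borel (\<lambda>x. sqrt (real n) * (- ln (P n (sample_mean B n x) \<phi>) / real n - KL \<theta> \<phi>)))
      (density lborel (normal_density 0 (sqrt (\<theta> * (1 - \<theta>)) * ln (\<theta> / (1 - \<theta>) * ((1 - \<phi>) / \<phi>)))))"
    if "P \<in> {P_CH, P_PBR, P_X}" for P
    using assms(2-6) that by (intro weak_conv_m_tail_statistic) auto
  ultimately show ?thesis
    unfolding Let_def sample_mean_def by simp
qed

end
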